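(* Let $n\ge2$ and $k\le n$ be integers with $k\ge n/2+1$, $d(n,k)=\frac{(n-k+1)(n-k+2)}{2}$ and $c(n,k)=\frac{n(n-1)}{2}-d(n,k)$. Then there is a diffeomorphism $$\mathbb{U}(n,\mathbb{R})/\mathbb{U}_k(n,\mathbb{Z})\cong T^{d(n,k)}\times\mathbb{R}^{c(n,k)},$$ identifying the homogeneous space (quotient by right multiplication) with the (trivial) normal bundle of the torus $T^{d(n,k)}\cong\mathbb{U}_k(n,\mathbb{R})/\mathbb{U}_k(n,\mathbb{Z})\subseteq\mathbb{U}(n,\mathbb{R})/\mathbb{U}_k(n,\mathbb{Z})$.
   Context: For $F\in\{\mathbb{Z},\mathbb{R}\}$, $\mathbb{U}(n,F)$ is the group of upper triangular $n\times n$ matrices over $F$ with $1$'s on the diagonal, and $\mathbb{U}_k(n,F)$ is its subgroup of matrices $(a_{rs})$ with $a_{rs}=0$ whenever $1\le s-r\le k-2$. *)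

theory Defs
  imports "HOL-Analysis.Analysis"
begin

text \<open>n x n matrices are real^'n^'n, with the rows/columns ordered by the linear
order of the finite index type 'n; pos i is the (0-based) position of i.\<close>

definition pos :: "'n::{finite,linorder} \<Rightarrow> nat" where
  "pos i = card {j. j < i}"

definition UR :: "(real^('n::{finite,linorder})^('n::{finite,linorder})) set" where
  "UR = {a. (\<forall>i. a$i$i = 1) \<and> (\<forall>i j. j < i \<longrightarrow> a$i$j = 0)}"

definition UkR :: "nat \<Rightarrow> (real^('n::{finite,linorder})^('n::{finite,linorder})) set" where
  "UkR k = {a \<in> UR. \<forall>r s. 1 \<le> int (pos s) - int (pos r) \<and> int (pos s) - int (pos r) \<le> int k - 2
              \<longrightarrow> a$r$s = 0}"

definition UkZ :: "nat \<Rightarrow> (real^('n::{finite,linorder})^('n::{finite,linorder})) set" where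
  "UkZ k = {a \<in> UkR k. \<forall>i j. a$i$j \<in> \<int>}"

text \<open>Tangent directions of U(n,R): strictly upper triangular matrices.\<close>
definition strict_upper :: "(real^('n::{finite,linorder})^('n::{finite,linorder})) set" where
  "strict_upper = {a. \<forall>i j. j \<le> i \<longrightarrow> a$i$j = 0}"

text \<open>C-infinity maps on a finite dimensional space: all iterated directional
(equivalently partial) derivatives exist everywhere and are continuous.\<close>
inductive iter_dderiv :: "('a::real_normed_vector \<Rightarrow> 'b::real_normed_vector) \<Rightarrow> ('a \<Rightarrow> 'b) \<Rightarrow> bool"
  for f where
  base: "iter_dderiv f f"
| step: "iter_dderiv f g \<Longrightarrow> iter_dderiv f (\<lambda>x. vector_derivative (\<lambda>t. g (x + t *\<^sub>R v)) (at 0))"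

definition smooth_map :: "('a::euclidean_space \<Rightarrow> 'b::real_normed_vector) \<Rightarrow> bool" where
  "smooth_map f \<longleftrightarrow> (\<forall>g. iter_dderiv f g \<longrightarrow>
      continuous_on UNIV g \<and> (\<forall>v x. (\<lambda>t::real. g (x + t *\<^sub>R v)) differentiable (at 0)))"

definition torus :: "(complex^'d) set" where
  "torus = {z. \<forall>i. norm (z$i) = 1}"

definition dnk :: "nat \<Rightarrow> nat \<Rightarrow> nat" where
  "dnk n k = ((n - k + 1) * (n - k + 2)) div 2"

definition cnk :: "nat \<Rightarrow> nat \<Rightarrow> nat" where
  "cnk n k = (n * (n - 1)) div 2 - dnk n k"

end

theory Submission
  imports Defs
begin

text \<open>
  Write g \<in> U(n,R) as 1 + N and split N into its middle band M (diagonals 1, ..., k - 2) and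
  its far band F (diagonals \<ge> k - 1). Then g = (1 + M) (1 + A) with A = (1 + M)\<inverse> F, a far-band
  matrix depending polynomially on g. Because 2 (k - 1) \<ge> n, products of far-band matrices
  vanish, so right multiplication by 1 + C with C in the far band fixes M and replaces A by
  A + C. Hence g \<mapsto> ((exp (2 \<pi> i a_rs)) for far-band positions (r, s), M) is constant exactly on
  the cosets g U_k(n,Z), maps U(n,R) onto T^d \<times> (middle band) and U_k(n,R) onto T^d \<times> {0};
  its components are circle maps of polynomials and a linear map, so it is smooth, and its
  differential is injective on strictly upper triangular matrices.
\<close>

type_synonym 'n sqmat = "real^'n^'n"

lemma pos_strict_mono: "(i::'n::{finite,linorder}) < j \<Longrightarrow> pos i < pos j"
  unfolding pos_def by (rule psubset_card_mono) auto

lemma pos_less_pos_iff: "pos (i::'n::{finite,linorder}) < pos j \<longleftrightarrow> i < j"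
  by (metis pos_strict_mono not_less_iff_gr_or_eq order_less_asym')

lemma pos_eq_pos_iff: "pos (i::'n::{finite,linorder}) = pos j \<longleftrightarrow> i = j"
  by (metis linorder_neqE nat_neq_iff pos_less_pos_iff)

lemma pos_less_card: "pos (i::'n::{finite,linorder}) < CARD('n)"
  unfolding pos_def by (rule psubset_card_mono) auto

lemma range_pos: "range (pos :: 'n::{finite,linorder} \<Rightarrow> nat) = {..<CARD('n)}"
proof -
  have "inj (pos :: 'n \<Rightarrow> nat)" by (meson injI pos_eq_pos_iff)
  then have "card (range (pos :: 'n \<Rightarrow> nat)) = card {..<CARD('n)}" by (simp add: card_image)
  moreover have "range (pos :: 'n \<Rightarrow> nat) \<subseteq> {..<CARD('n)}" using pos_less_card by auto
  ultimately show ?thesis by (simp add: card_subset_eq)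
qed

definition diag_index :: "'n::{finite,linorder} \<Rightarrow> 'n \<Rightarrow> int" where
  "diag_index r s = int (pos s) - int (pos r)"

lemma diag_index_eq_0_iff: "diag_index r s = 0 \<longleftrightarrow> r = s"
  unfolding diag_index_def using pos_eq_pos_iff by fastforce

lemma diag_index_pos_iff: "0 < diag_index r s \<longleftrightarrow> r < s"
  unfolding diag_index_def using pos_less_pos_iff[of r s] by linarith

lemma diag_index_less_card: "diag_index (r::'n::{finite,linorder}) s < int CARD('n)"
  using pos_less_card[of s] unfolding diag_index_def by linarith

definition above_diag :: "int \<Rightarrow> ('n::{finite,linorder}) sqmat \<Rightarrow> bool" where
  "above_diag m a \<longleftrightarrow> (\<forall>r s. diag_index r s < m \<longrightarrow> a$r$s = 0)"

lemma above_diag_zero [simp]: "above_diag m 0"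
  by (simp add: above_diag_def)

lemma above_diag_add: "above_diag m a \<Longrightarrow> above_diag m b \<Longrightarrow> above_diag m (a + b)"
  by (simp add: above_diag_def)

lemma above_diag_diff: "above_diag m a \<Longrightarrow> above_diag m b \<Longrightarrow> above_diag m (a - b)"
  by (simp add: above_diag_def)

lemma above_diag_uminus: "above_diag m a \<Longrightarrow> above_diag m (- a)"
  by (simp add: above_diag_def)

lemma above_diag_sum:
  "(\<And>i. i \<in> I \<Longrightarrow> above_diag m (a i)) \<Longrightarrow> above_diag m (\<Sum>i\<in>I. a i)"
  by (induction I rule: infinite_finite_induct) (auto intro: above_diag_add)

lemma above_diag_mono: "above_diag m a \<Longrightarrow> l \<le> m \<Longrightarrow> above_diag l a"
  by (simp add: above_diag_def)

lemma above_diag_mat_1: "above_diag 0 (mat 1)"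
  by (auto simp: above_diag_def mat_def diag_index_eq_0_iff[symmetric])

lemma above_diag_mult:
  fixes a b :: "('n::{finite,linorder}) sqmat"
  assumes "above_diag m a" "above_diag l b"
  shows "above_diag (m + l) (a ** b)"
  unfolding above_diag_def
proof (intro allI impI)
  fix r s :: 'n assume "diag_index r s < m + l"
  then have "diag_index r t < m \<or> diag_index t s < l" for t
    by (auto simp: diag_index_def)
  then have "\<forall>t\<in>UNIV. a$r$t * b$t$s = 0"
    using assms unfolding above_diag_def by (metis mult_eq_0_iff)
  then show "(a ** b)$r$s = 0"
    unfolding matrix_matrix_mult_def vec_lambda_beta by (rule sum.neutral)
qed

lemma above_diag_card_eq_0:
  fixes a :: "('n::{finite,linorder}) sqmat"
  assumes "above_diag m a" "int CARD('n) \<le> m"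
  shows "a = 0"
proof -
  have "a$r$s = 0" for r s
    using assms diag_index_less_card[of r s] unfolding above_diag_def by force
  then show ?thesis by (simp add: vec_eq_iff)
qed

lemma UR_iff_above_diag: "g \<in> UR \<longleftrightarrow> above_diag 1 (g - mat 1)"
proof -
  have lt1: "diag_index r s < 1 \<longleftrightarrow> r = s \<or> s < r" for r s :: "'n::{finite,linorder}"
    using diag_index_eq_0_iff[of r s] diag_index_pos_iff[of r s] by (auto simp: not_less)
  have "above_diag 1 (g - mat 1) \<longleftrightarrow> (\<forall>r s. r = s \<or> s < r \<longrightarrow> g$r$s = (if r = s then 1 else 0))"
    unfolding above_diag_def lt1 by (simp add: mat_def)
  also have "\<dots> \<longleftrightarrow> g \<in> UR"
    unfolding UR_def by (auto dest: order.strict_implies_not_eq)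
  finally show ?thesis ..
qed

lemma strict_upper_iff_above_diag:
  fixes X :: "('n::{finite,linorder}) sqmat"
  shows "X \<in> strict_upper \<longleftrightarrow> above_diag 1 X"
proof -
  have "diag_index r s < 1 \<longleftrightarrow> s \<le> r" for r s :: "'n::{finite,linorder}"
    using diag_index_pos_iff[of r s] by (auto simp: not_less)
  then show ?thesis
    by (simp add: strict_upper_def above_diag_def)
qed

lemma matrix_add_rdistrib: "(A + B) ** C = A ** C + B ** (C::'a::semiring_1^'n^'m)"
  by (vector matrix_matrix_mult_def sum.distrib[symmetric] field_simps)

lemma matrix_uminus_left: "(- A) ** B = - (A ** (B::'a::ring_1^'n^'m))"
  by (simp add: matrix_matrix_mult_def vec_eq_iff sum_negf)

fun matpow :: "'a::semiring_1^'n^'n \<Rightarrow> nat \<Rightarrow> 'a^'n^'n" where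
  "matpow N 0 = mat 1"
| "matpow N (Suc j) = N ** matpow N j"

lemma matrix_geometric_sum:
  fixes N :: "'a::ring_1^'n^'n"
  shows "(mat 1 + N) ** (\<Sum>j<m. matpow (- N) j) = mat 1 - matpow (- N) m"
  by (induction m) (simp_all add: matrix_add_ldistrib matrix_add_rdistrib matrix_uminus_left)

lemma above_diag_matpow: "above_diag 1 N \<Longrightarrow> above_diag (int j) (matpow N j)"
  by (induction j) (auto simp: above_diag_mat_1 dest: above_diag_mult)

text \<open>Unlike matrix_inv, the truncated Neumann series is visibly a polynomial in N, which the
  smoothness proof needs.\<close>

definition neumann :: "('n::{finite,linorder}) sqmat \<Rightarrow> 'n sqmat" where
  "neumann N = (\<Sum>j<CARD('n). matpow (- N) j)"

lemma above_diag_neumann: "above_diag 1 N \<Longrightarrow> above_diag 0 (neumann N)"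
  unfolding neumann_def
  by (intro above_diag_sum above_diag_mono[OF above_diag_matpow]) (auto intro: above_diag_uminus)

lemma neumann_right_inverse:
  fixes N :: "('n::{finite,linorder}) sqmat"
  assumes "above_diag 1 N"
  shows "(mat 1 + N) ** neumann N = mat 1"
proof -
  have "above_diag (int CARD('n)) (matpow (- N) CARD('n))"
    using assms by (intro above_diag_matpow above_diag_uminus)
  then have "matpow (- N) CARD('n) = 0"
    by (rule above_diag_card_eq_0) simp
  then show ?thesis
    unfolding neumann_def matrix_geometric_sum by simp
qed

lemma neumann_left_inverse: "above_diag 1 N \<Longrightarrow> neumann N ** (mat 1 + N) = mat 1"
  using neumann_right_inverse matrix_left_right_inverse by blast

definition mask :: "('n \<times> 'n) set \<Rightarrow> real^'n^'n \<Rightarrow> real^'n^'n" where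
  "mask S a = (\<chi> r s. if (r, s) \<in> S then a$r$s else 0)"

lemma mask_add: "mask S (a + b) = mask S a + mask S b"
  by (simp add: mask_def vec_eq_iff)

lemma mask_scaleR: "mask S (c *\<^sub>R a) = c *\<^sub>R mask S a"
  by (simp add: mask_def vec_eq_iff)

lemma mask_diff: "mask S (a - b) = mask S a - mask S b"
  by (simp add: mask_def vec_eq_iff)

lemma bounded_linear_mask: "bounded_linear (mask S)"
proof -
  have "linear (mask S)" by (rule linearI) (simp_all add: mask_add mask_scaleR)
  then show ?thesis by (simp add: linear_conv_bounded_linear)
qed

lemma mask_eq_self_iff: "mask S a = a \<longleftrightarrow> (\<forall>r s. (r, s) \<notin> S \<longrightarrow> a$r$s = 0)"
  by (auto simp: mask_def vec_eq_iff)

lemma mask_eq_0_iff: "mask S a = 0 \<longleftrightarrow> (\<forall>r s. (r, s) \<in> S \<longrightarrow> a$r$s = 0)"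
  by (auto simp: mask_def vec_eq_iff)

definition mid_band :: "nat \<Rightarrow> ('n::{finite,linorder} \<times> 'n) set" where
  "mid_band k = {(r, s). 1 \<le> diag_index r s \<and> diag_index r s \<le> int k - 2}"

definition far_band :: "nat \<Rightarrow> ('n::{finite,linorder} \<times> 'n) set" where
  "far_band k = {(r, s). int k - 1 \<le> diag_index r s}"

abbreviation mid_part :: "nat \<Rightarrow> ('n::{finite,linorder}) sqmat \<Rightarrow> 'n sqmat" where
  "mid_part k \<equiv> mask (mid_band k)"

abbreviation far_part :: "nat \<Rightarrow> ('n::{finite,linorder}) sqmat \<Rightarrow> 'n sqmat" where
  "far_part k \<equiv> mask (far_band k)"

lemma above_diag_iff_far_part: "above_diag (int k - 1) a \<longleftrightarrow> far_part k a = a"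
  by (auto simp: above_diag_def far_band_def mask_eq_self_iff)

lemma above_diag_far_part: "above_diag (int k - 1) (far_part k a)"
  by (simp add: above_diag_iff_far_part mask_def vec_eq_iff)

lemma above_diag_mid_part: "above_diag 1 (mid_part k a)"
  by (auto simp: above_diag_def mid_band_def mask_def)

lemma mid_part_far: "above_diag (int k - 1) a \<Longrightarrow> mid_part k a = 0"
  by (auto simp: above_diag_def mid_band_def mask_eq_0_iff)

lemma far_part_mid: "mid_part k a = a \<Longrightarrow> far_part k a = 0"
  by (force simp: mask_eq_self_iff mask_eq_0_iff mid_band_def far_band_def)

lemma mask_mat_1: "(\<And>r. (r, r) \<notin> S) \<Longrightarrow> mask S (mat 1) = 0"
  by (simp add: mask_eq_0_iff mat_def)

lemma mid_part_mat_1: "mid_part k (mat 1) = 0"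
  by (rule mask_mat_1) (simp add: mid_band_def diag_index_def)

lemma far_part_mat_1: "2 \<le> k \<Longrightarrow> far_part k (mat 1) = 0"
  by (rule mask_mat_1) (simp add: far_band_def diag_index_def)

lemma strict_upper_eq_mid_plus_far:
  "above_diag 1 a \<Longrightarrow> a = mid_part k a + far_part k a"
  by (auto simp: above_diag_def mid_band_def far_band_def mask_def vec_eq_iff)

definition far_coord :: "nat \<Rightarrow> ('n::{finite,linorder}) sqmat \<Rightarrow> 'n sqmat" where
  "far_coord k g = neumann (mid_part k g) ** far_part k g"

lemma above_diag_far_coord: "above_diag (int k - 1) (far_coord k g)"
  unfolding far_coord_def
  using above_diag_mult[OF above_diag_neumann[OF above_diag_mid_part] above_diag_far_part] by simp

lemma far_coord_add_mid_free:
  assumes "mid_part k X = 0"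
  shows "far_coord k (g + X) = far_coord k g + neumann (mid_part k g) ** far_part k X"
  using assms by (simp add: far_coord_def mask_add matrix_add_ldistrib)

lemma mid_far_factorization:
  assumes "2 \<le> k" "g \<in> UR"
  shows "(mat 1 + mid_part k g) ** (mat 1 + far_coord k g) = g"
proof -
  have "g - mat 1 = mid_part k g + far_part k g"
    using strict_upper_eq_mid_plus_far[of "g - mat 1" k] assms
    by (simp add: UR_iff_above_diag mask_diff mid_part_mat_1 far_part_mat_1)
  then have "g = mat 1 + mid_part k g + far_part k g"
    by (simp add: algebra_simps)
  then show ?thesis
    unfolding far_coord_def matrix_add_ldistrib matrix_mul_assoc
    by (simp add: neumann_right_inverse[OF above_diag_mid_part])
qed

lemma above_diag_0_if_UR: "g \<in> UR \<Longrightarrow> above_diag 0 g"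
  using above_diag_add[OF above_diag_mono above_diag_mat_1, of 1 "g - mat 1"]
  by (simp add: UR_iff_above_diag)

lemma UR_mult:
  assumes "g \<in> UR" "h \<in> UR"
  shows "g ** h \<in> UR"
proof -
  define a b where "a = g - mat 1" and "b = h - mat 1"
  then have "g = mat 1 + a" "h = mat 1 + b"
    by simp_all
  then have "g ** h - mat 1 = a + b + a ** b"
    by (simp add: matrix_add_ldistrib matrix_add_rdistrib algebra_simps)
  moreover have "above_diag 1 a" "above_diag 1 b"
    using assms by (simp_all add: a_def b_def UR_iff_above_diag)
  moreover have "above_diag 1 (a ** b)"
    using above_diag_mult[OF \<open>above_diag 1 a\<close> \<open>above_diag 1 b\<close>] by (rule above_diag_mono) simp
  ultimately show ?thesis
    by (simp add: UR_iff_above_diag above_diag_add)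
qed

lemma UkR_iff_mid_part: "g \<in> UkR k \<longleftrightarrow> g \<in> UR \<and> mid_part k g = 0"
  by (auto simp: UkR_def mask_eq_0_iff mid_band_def diag_index_def)

lemma UkR_iff_above_diag:
  assumes "2 \<le> k"
  shows "g \<in> UkR k \<longleftrightarrow> above_diag (int k - 1) (g - mat 1)"
proof
  assume "g \<in> UkR k"
  then have "above_diag 1 (g - mat 1)" "mid_part k (g - mat 1) = 0"
    by (simp_all add: UkR_iff_mid_part UR_iff_above_diag mask_diff mid_part_mat_1)
  then show "above_diag (int k - 1) (g - mat 1)"
    by (metis strict_upper_eq_mid_plus_far above_diag_far_part add_0)
next
  assume "above_diag (int k - 1) (g - mat 1)"
  moreover from this have "above_diag 1 (g - mat 1)"
    by (rule above_diag_mono) (use assms in simp)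
  ultimately show "g \<in> UkR k"
    using mid_part_far by (fastforce simp: UkR_iff_mid_part UR_iff_above_diag mask_diff mid_part_mat_1)
qed

lemma UkZ_iff_above_diag:
  assumes "2 \<le> k"
  shows "\<gamma> \<in> UkZ k \<longleftrightarrow> above_diag (int k - 1) (\<gamma> - mat 1) \<and> (\<forall>r s. (\<gamma> - mat 1)$r$s \<in> \<int>)"
proof -
  have ints: "\<gamma>$r$s \<in> \<int> \<longleftrightarrow> (\<gamma> - mat 1)$r$s \<in> \<int>" for r s
  proof -
    have I: "mat 1 $ r $ s \<in> (\<int> :: real set)"
      by (simp add: mat_def)
    have "\<gamma>$r$s = (\<gamma> - mat 1)$r$s + mat 1 $ r $ s" "(\<gamma> - mat 1)$r$s = \<gamma>$r$s - mat 1 $ r $ s"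
      by simp_all
    then show ?thesis
      using Ints_add[OF _ I] Ints_diff[OF _ I] by metis
  qed
  show ?thesis
    unfolding UkZ_def UkR_iff_above_diag[OF assms] mem_Collect_eq ints ..
qed

lemma far_band_mult_eq_0:
  fixes a b :: "('n::{finite,linorder}) sqmat"
  assumes "int CARD('n) \<le> 2 * (int k - 1)" "above_diag (int k - 1) a" "above_diag (int k - 1) b"
  shows "a ** b = 0"
  using above_diag_card_eq_0[OF above_diag_mult[OF assms(2,3)]] assms(1) by simp

lemma neumann_mid_part_mult:
  assumes "2 \<le> k" "g \<in> UR"
  shows "neumann (mid_part k g) ** g = mat 1 + far_coord k g"
  using arg_cong[OF mid_far_factorization[OF assms], of "\<lambda>x. neumann (mid_part k g) ** x"]
  by (simp add: matrix_mul_assoc neumann_left_inverse[OF above_diag_mid_part])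

lemma right_mult_far_band:
  fixes g C :: "('n::{finite,linorder}) sqmat"
  assumes k: "2 \<le> k" "int CARD('n) \<le> 2 * (int k - 1)"
    and g: "g \<in> UR" and C: "above_diag (int k - 1) C"
  shows "mid_part k (g ** (mat 1 + C)) = mid_part k g"
    and "far_coord k (g ** (mat 1 + C)) = far_coord k g + C"
proof -
  have gC: "above_diag (int k - 1) (g ** C)"
    using above_diag_mult[OF above_diag_0_if_UR[OF g] C] by simp
  have prod: "g ** (mat 1 + C) = g + g ** C"
    by (simp add: matrix_add_ldistrib)
  show mid: "mid_part k (g ** (mat 1 + C)) = mid_part k g"
    unfolding prod mask_add mid_part_far[OF gC] by simp
  have far: "far_part k (g ** (mat 1 + C)) = far_part k g + g ** C"
    unfolding prod mask_add above_diag_iff_far_part[THEN iffD1, OF gC] ..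
  have "neumann (mid_part k g) ** (g ** C) = C + far_coord k g ** C"
    by (simp add: matrix_mul_assoc neumann_mid_part_mult[OF k(1) g] matrix_add_rdistrib)
  also have "\<dots> = C"
    using far_band_mult_eq_0[OF k(2) above_diag_far_coord C] by simp
  finally show "far_coord k (g ** (mat 1 + C)) = far_coord k g + C"
    unfolding far_coord_def mid far by (simp add: matrix_add_ldistrib)
qed

lemma right_mult_far_band_iff:
  fixes g h C :: "('n::{finite,linorder}) sqmat"
  assumes k: "2 \<le> k" "int CARD('n) \<le> 2 * (int k - 1)"
    and gh: "g \<in> UR" "h \<in> UR" and C: "above_diag (int k - 1) C"
  shows "h = g ** (mat 1 + C) \<longleftrightarrow>
    mid_part k h = mid_part k g \<and> far_coord k h = far_coord k g + C"
proof
  assume "mid_part k h = mid_part k g \<and> far_coord k h = far_coord k g + C"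
  moreover have "(mat 1 + far_coord k g) ** (mat 1 + C) = mat 1 + (far_coord k g + C)"
    using far_band_mult_eq_0[OF k(2) above_diag_far_coord C]
    by (simp add: matrix_add_ldistrib matrix_add_rdistrib algebra_simps)
  ultimately show "h = g ** (mat 1 + C)"
    using mid_far_factorization[OF k(1) gh(1)] mid_far_factorization[OF k(1) gh(2)]
    by (metis matrix_mul_assoc)
qed (use right_mult_far_band[OF k gh(1) C] in simp)

lemma mid_part_far_coord_of_product:
  fixes X B :: "('n::{finite,linorder}) sqmat"
  assumes k: "2 \<le> k" "int CARD('n) \<le> 2 * (int k - 1)"
    and X: "mid_part k X = X" and B: "above_diag (int k - 1) B"
  defines "g \<equiv> (mat 1 + X) ** (mat 1 + B)"
  shows "g \<in> UR" "mid_part k g = X" "far_coord k g = B"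
proof -
  have X1: "mat 1 + X \<in> UR"
    using above_diag_mid_part[of k X] X by (simp add: UR_iff_above_diag)
  have "mid_part k (mat 1 + X) = X" "far_coord k (mat 1 + X) = 0"
    using X far_part_mid[OF X] by (simp_all add: mask_add mid_part_mat_1 far_part_mat_1[OF k(1)] far_coord_def)
  then show "mid_part k g = X" "far_coord k g = B"
    using right_mult_far_band[OF k X1 B] by (simp_all add: g_def)
  have "mat 1 + B \<in> UR"
    using above_diag_mono[OF B, of 1] k(1) by (simp add: UR_iff_above_diag)
  then show "g \<in> UR"
    unfolding g_def using X1 by (rule UR_mult[rotated])
qed

lemma card_pairs_with_gap:
  "2 * card {(a, b). a < n \<and> b < n \<and> a + m \<le> b} = (n + 1 - m) * (n - m)"
proof (induction n)
  case (Suc n)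
  let ?old = "{(a, b). a < n \<and> b < n \<and> a + m \<le> b}"
  let ?new = "(\<lambda>a. (a, n)) ` {..<Suc n - m}"
  have "{(a, b). a < Suc n \<and> b < Suc n \<and> a + m \<le> b} = ?old \<union> ?new"
    by auto
  moreover have "card (?old \<union> ?new) = card ?old + card ?new"
    by (rule card_Un_disjoint) (auto intro: finite_subset[of _ "{..<n} \<times> {..<n}"])
  moreover have "card ?new = Suc n - m"
    by (simp add: card_image inj_on_def)
  ultimately have "card {(a, b). a < Suc n \<and> b < Suc n \<and> a + m \<le> b} = card ?old + (Suc n - m)"
    by simp
  moreover have "(n + 1 - m) * (n - m) + 2 * (Suc n - m) = (Suc n + 1 - m) * (Suc n - m)"
  proof (cases "m \<le> n")
    case True
    then obtain t where "n = m + t"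
      using le_iff_add by blast
    then show ?thesis by (simp add: algebra_simps)
  next
    case False
    then show ?thesis by (cases "m = Suc n") auto
  qed
  ultimately show ?case
    using Suc.IH by simp
qed simp

lemma card_pos_pairs:
  "card {(r, s). P (pos (r::'n::{finite,linorder})) (pos (s::'n))} =
   card {(a, b). a < CARD('n) \<and> b < CARD('n) \<and> P a b}"
proof -
  let ?L = "{(r, s). P (pos (r::'n)) (pos (s::'n))}"
  have "inj (map_prod pos pos :: 'n \<times> 'n \<Rightarrow> nat \<times> nat)"
    by (simp add: inj_on_def pos_eq_pos_iff)
  then have "card (map_prod pos pos ` ?L) = card ?L"
    by (simp add: card_image inj_on_subset)
  moreover have "map_prod pos pos ` ?L = {(a, b). a < CARD('n) \<and> b < CARD('n) \<and> P a b}"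
  proof (intro equalityI subsetI)
    fix p assume "p \<in> {(a, b). a < CARD('n) \<and> b < CARD('n) \<and> P a b}"
    moreover obtain a b where "p = (a, b)" by fastforce
    ultimately obtain r s :: 'n where "p = (pos r, pos s)" "P (pos r) (pos s)"
      using range_pos[where 'n='n] by (metis (no_types, lifting) case_prodD imageE lessThan_iff mem_Collect_eq)
    then show "p \<in> map_prod pos pos ` ?L" by force
  qed (auto simp: pos_less_card)
  ultimately show ?thesis by simp
qed

lemma card_far_band:
  assumes "CARD('n::{finite,linorder}) = n" "1 \<le> k" "k \<le> n"
  shows "card (far_band k :: ('n \<times> 'n) set) = dnk n k"
proof -
  have "far_band k = {(r, s). pos (r::'n) + (k - 1) \<le> pos (s::'n)}"
    using assms(2) by (auto simp: far_band_def diag_index_def)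
  then have "2 * card (far_band k :: ('n \<times> 'n) set) = (n + 1 - (k - 1)) * (n - (k - 1))"
    using card_pairs_with_gap[of n "k - 1"] card_pos_pairs[where 'n='n, of "\<lambda>a b. a + (k - 1) \<le> b"] assms(1) by simp
  also have "\<dots> = (n - k + 1) * (n - k + 2)"
    using assms(2,3) by (simp add: Suc_diff_le)
  finally have "(n - k + 1) * (n - k + 2) = 2 * card (far_band k :: ('n \<times> 'n) set)" ..
  then show ?thesis
    unfolding dnk_def by simp
qed

lemma card_mid_band:
  assumes "CARD('n::{finite,linorder}) = n" "2 \<le> k" "k \<le> n"
  shows "card (mid_band k :: ('n \<times> 'n) set) = cnk n k"
proof -
  let ?U = "{(r, s). pos (r::'n) + 1 \<le> pos (s::'n)}"
  have "mid_band k = ?U - far_band k" "far_band k \<subseteq> ?U"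
    using assms(2) by (auto simp: mid_band_def far_band_def diag_index_def)
  moreover have "2 * card ?U = n * (n - 1)"
    using card_pairs_with_gap[of n 1] card_pos_pairs[where 'n='n, of "\<lambda>a b. a + 1 \<le> b"] assms(1) by simp
  ultimately show ?thesis
    using card_far_band[OF assms(1) _ assms(3)] assms(2)
    by (simp add: card_Diff_subset cnk_def)
qed

definition supported_on :: "('n \<times> 'm) set \<Rightarrow> (real^'m^'n) set" where
  "supported_on S = {X. \<forall>r s. (r, s) \<notin> S \<longrightarrow> X$r$s = 0}"

lemma supported_on_eq_substandard:
  fixes S :: "('n::finite \<times> 'm::finite) set"
  shows "supported_on S =
    {X. \<forall>b\<in>Basis. b \<notin> (\<lambda>(r, s). axis r (axis s 1)) ` S \<longrightarrow> X \<bullet> b = 0}"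
proof -
  have "axis r (axis s 1) \<in> (\<lambda>(r, s). axis r (axis s 1) :: real^'m^'n) ` S \<longleftrightarrow> (r, s) \<in> S" for r s
    by (auto simp: axis_eq_axis)
  then show ?thesis
    by (auto simp: supported_on_def Basis_vec_def inner_axis)
qed

lemma subspace_supported_on: "subspace (supported_on S)"
  unfolding supported_on_eq_substandard by (rule subspace_substandard)

lemma dim_supported_on:
  fixes S :: "('n::finite \<times> 'm::finite) set"
  shows "dim (supported_on S :: (real^'m^'n) set) = card S"
proof -
  have "inj_on (\<lambda>(r, s). axis r (axis s 1) :: real^'m^'n) S"
    by (auto simp: inj_on_def axis_eq_axis)
  moreover have "(\<lambda>(r, s). axis r (axis s 1)) ` S \<subseteq> (Basis :: (real^'m^'n) set)"
    by (auto simp: Basis_vec_def)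
  ultimately show ?thesis
    unfolding supported_on_eq_substandard by (simp add: dim_substandard card_image)
qed

lemma mask_eq_self_iff_supported_on: "mask S a = a \<longleftrightarrow> a \<in> supported_on S"
  by (simp add: mask_eq_self_iff supported_on_def)

lemma polynomial_function_vec_lambda_iff:
  fixes f :: "'a::real_normed_vector \<Rightarrow> 'i::finite \<Rightarrow> 'b::euclidean_space"
  shows "polynomial_function (\<lambda>x. \<chi> i. f x i) \<longleftrightarrow> (\<forall>i. polynomial_function (\<lambda>x. f x i))"
  by (auto simp: polynomial_function_iff_Basis_inner Basis_vec_def inner_axis)

lemma polynomial_function_vec_nth:
  "polynomial_function f \<Longrightarrow> polynomial_function (\<lambda>x. f x $ i :: 'b::euclidean_space)"
  using polynomial_function_vec_lambda_iff[of "\<lambda>x i. f x $ i"] by simp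

lemma polynomial_function_matrix_mult:
  fixes A B :: "'a::real_normed_vector \<Rightarrow> real^'n^'n"
  assumes "polynomial_function A" "polynomial_function B"
  shows "polynomial_function (\<lambda>x. A x ** B x)"
  using assms
  by (auto simp: matrix_matrix_mult_def polynomial_function_vec_lambda_iff
      intro!: polynomial_function_sum polynomial_function_mult[where 'b=real, simplified]
      polynomial_function_vec_nth)

lemma polynomial_function_matpow:
  fixes N :: "'a::real_normed_vector \<Rightarrow> real^'n^'n"
  shows "polynomial_function N \<Longrightarrow> polynomial_function (\<lambda>x. matpow (N x) j)"
  by (induction j) (simp_all add: polynomial_function_matrix_mult)

lemma polynomial_function_far_coord: "polynomial_function (far_coord k)"
proof -
  have "polynomial_function (\<lambda>g. neumann (mid_part k g))"
    unfolding neumann_def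
    by (intro polynomial_function_sum polynomial_function_matpow polynomial_function_minus
        polynomial_function_bounded_linear bounded_linear_mask) simp
  moreover have "polynomial_function (far_part k)"
    by (intro polynomial_function_bounded_linear bounded_linear_mask)
  ultimately show ?thesis
    unfolding far_coord_def[abs_def] by (rule polynomial_function_matrix_mult)
qed

lemma has_vector_derivative_along_line:
  assumes "(g has_derivative D) (at x)"
  shows "((\<lambda>t. g (x + t *\<^sub>R v)) has_vector_derivative D v) (at 0)"
proof -
  have "((\<lambda>t. x + t *\<^sub>R v) has_derivative (\<lambda>t. t *\<^sub>R v)) (at 0)"
    by (auto intro!: derivative_eq_intros)
  from has_derivative_compose[OF this] assms
  have "((\<lambda>t. g (x + t *\<^sub>R v)) has_derivative (\<lambda>t. D (t *\<^sub>R v))) (at 0)"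
    by simp
  then show ?thesis
    using assms by (simp add: has_vector_derivative_def linear_scale has_derivative_linear)
qed

lemma smooth_map_if_derivatives_in_class:
  fixes f :: "'a::euclidean_space \<Rightarrow> 'b::real_normed_vector"
  assumes "P f"
    and closed: "\<And>g. P g \<Longrightarrow> \<exists>D. (\<forall>x. (g has_derivative D x) (at x)) \<and> (\<forall>v. P (\<lambda>x. D x v))"
  shows "smooth_map f"
proof -
  have "P g" if "iter_dderiv f g" for g
    using that
  proof induction
    case (step g v)
    then obtain D where "\<forall>x. (g has_derivative D x) (at x)" "\<forall>v. P (\<lambda>x. D x v)"
      using closed by blast
    moreover from this have "vector_derivative (\<lambda>t. g (x + t *\<^sub>R v)) (at 0) = D x v" for x
      using has_vector_derivative_along_line vector_derivative_at by blast
    ultimately show ?case by simp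
  qed (use assms in simp)
  then show ?thesis
    unfolding smooth_map_def
    using closed has_derivative_continuous continuous_at_imp_continuous_on
      has_vector_derivative_along_line differentiableI_vector
    by metis
qed

lemma real_polynomial_function_has_derivative:
  assumes "real_polynomial_function p"
  shows "\<exists>D. (\<forall>x. (p has_derivative D x) (at x)) \<and> (\<forall>v. real_polynomial_function (\<lambda>x. D x v))"
  using assms
proof induction
  case (linear f)
  then show ?case
    by (intro exI[of _ "\<lambda>x. f"]) (auto intro: bounded_linear_imp_has_derivative)
next
  case (const c)
  then show ?case
    by (intro exI[of _ "\<lambda>x h. 0"]) auto
next
  case (add p q)
  then obtain Dp Dq where "\<forall>x. (p has_derivative Dp x) (at x)" "\<forall>v. real_polynomial_function (\<lambda>x. Dp x v)"
    "\<forall>x. (q has_derivative Dq x) (at x)" "\<forall>v. real_polynomial_function (\<lambda>x. Dq x v)"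
    by blast
  then show ?case
    by (intro exI[of _ "\<lambda>x h. Dp x h + Dq x h"]) (auto intro: has_derivative_add)
next
  case (mult p q)
  then obtain Dp Dq where
    Dp: "\<And>x. (p has_derivative Dp x) (at x)" "\<And>v. real_polynomial_function (\<lambda>x. Dp x v)" and
    Dq: "\<And>x. (q has_derivative Dq x) (at x)" "\<And>v. real_polynomial_function (\<lambda>x. Dq x v)"
    by blast
  \<comment> \<open>The library hides the names of the introduction rules; (3) is add, (4) is mult.\<close>
  have "real_polynomial_function (\<lambda>x. p x * Dq x v + Dp x v * q x)" for v
    using mult.hyps Dp(2) Dq(2) by (intro real_polynomial_function.intros(3,4))
  with has_derivative_mult[OF Dp(1) Dq(1)] show ?case
    by (intro exI[of _ "\<lambda>x h. p x * Dq x h + Dp x h * q x"] conjI allI)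
qed

definition cis_polynomial :: "('a::real_normed_vector \<Rightarrow> complex) \<Rightarrow> bool" where
  "cis_polynomial h \<longleftrightarrow> (\<exists>q a b. real_polynomial_function q \<and> real_polynomial_function a \<and>
     real_polynomial_function b \<and> h = (\<lambda>x. cis (q x) * (of_real (a x) + \<i> * of_real (b x))))"

lemma cis_polynomial_cis: "real_polynomial_function q \<Longrightarrow> cis_polynomial (\<lambda>x. cis (q x))"
  unfolding cis_polynomial_def
  by (intro exI[of _ q] exI[of _ "\<lambda>x. 1"] exI[of _ "\<lambda>x. 0"]) auto

lemma cis_polynomial_has_derivative:
  assumes "cis_polynomial h"
  shows "\<exists>D. (\<forall>x. (h has_derivative D x) (at x)) \<and> (\<forall>v. cis_polynomial (\<lambda>x. D x v))"
proof -
  obtain q a b where poly: "real_polynomial_function q" "real_polynomial_function a" "real_polynomial_function b"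
    and h: "h = (\<lambda>x. cis (q x) * (of_real (a x) + \<i> * of_real (b x)))"
    using assms cis_polynomial_def by blast
  obtain Dq Da Db where
    Dq: "\<And>x. (q has_derivative Dq x) (at x)" "\<And>v. real_polynomial_function (\<lambda>x. Dq x v)" and
    Da: "\<And>x. (a has_derivative Da x) (at x)" "\<And>v. real_polynomial_function (\<lambda>x. Da x v)" and
    Db: "\<And>x. (b has_derivative Db x) (at x)" "\<And>v. real_polynomial_function (\<lambda>x. Db x v)"
    using real_polynomial_function_has_derivative[OF poly(1)] real_polynomial_function_has_derivative[OF poly(2)]
      real_polynomial_function_has_derivative[OF poly(3)] by metis
  define D where "D x v = cis (q x) *
    (of_real (Da x v - Dq x v * b x) + \<i> * of_real (Db x v + Dq x v * a x))" for x v
  have "(h has_derivative D x) (at x)" for x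
  proof -
    have "((\<lambda>x. of_real (a x) + \<i> * of_real (b x)) has_derivative
        (\<lambda>t. of_real (Da x t) + \<i> * of_real (Db x t))) (at x)"
      by (intro has_derivative_add has_derivative_mult_right has_derivative_of_real Da(1) Db(1))
    from has_derivative_mult[OF has_derivative_cis[OF Dq(1)] this] show ?thesis
      unfolding h by (rule has_derivative_eq_rhs) (simp add: fun_eq_iff D_def algebra_simps scaleR_conv_of_real)
  qed
  moreover have "cis_polynomial (\<lambda>x. D x v)" for v
  proof -
    have "real_polynomial_function (\<lambda>x. Da x v - Dq x v * b x)"
      by (intro real_polynomial_function_diff real_polynomial_function.intros(4) Da(2) Dq(2) poly(3))
    moreover have "real_polynomial_function (\<lambda>x. Db x v + Dq x v * a x)"
      by (intro real_polynomial_function.intros(3,4) Db(2) Dq(2) poly(2))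
    ultimately show ?thesis
      unfolding cis_polynomial_def D_def using poly(1)
      by (intro exI[of _ q] exI[of _ "\<lambda>x. Da x v - Dq x v * b x"] exI[of _ "\<lambda>x. Db x v + Dq x v * a x"] conjI refl)
  qed
  ultimately show ?thesis by blast
qed

lemma has_derivative_vec_lambda:
  fixes f :: "'a::real_normed_vector \<Rightarrow> 'i::finite \<Rightarrow> 'b::euclidean_space"
  assumes "\<And>i. ((\<lambda>x. f x i) has_derivative f' i) (at x within S)"
  shows "((\<lambda>x. \<chi> i. f x i) has_derivative (\<lambda>h. \<chi> i. f' i h)) (at x within S)"
proof (rule has_derivative_componentwise_within[THEN iffD2], rule ballI)
  fix b :: "'b^'i" assume "b \<in> Basis"
  then obtain i u where b: "b = axis i u" "u \<in> Basis"
    by (auto simp: Basis_vec_def)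
  have "((\<lambda>x. f x i \<bullet> u) has_derivative (\<lambda>h. f' i h \<bullet> u)) (at x within S)"
    using has_derivative_componentwise_within[THEN iffD1, OF assms[of i]] b(2) by (rule bspec)
  then show "((\<lambda>x. (\<chi> i. f x i) \<bullet> b) has_derivative (\<lambda>h. (\<chi> i. f' i h) \<bullet> b)) (at x within S)"
    by (simp add: b inner_axis)
qed

definition torus_affine_map :: "('a::real_normed_vector \<Rightarrow> (complex^'d) \<times> 'c::real_normed_vector) \<Rightarrow> bool" where
  "torus_affine_map F \<longleftrightarrow> (\<forall>i. cis_polynomial (\<lambda>x. fst (F x) $ i)) \<and>
     (\<exists>l c. bounded_linear l \<and> (\<forall>x. snd (F x) = l x + c))"

lemma torus_affine_map_has_derivative:
  assumes "torus_affine_map F"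
  shows "\<exists>D. (\<forall>x. (F has_derivative D x) (at x)) \<and> (\<forall>v. torus_affine_map (\<lambda>x. D x v))"
proof -
  have fst_F: "\<And>i. cis_polynomial (\<lambda>x. fst (F x) $ i)"
    and "\<exists>l c. bounded_linear l \<and> (\<forall>x. snd (F x) = l x + c)"
    using assms unfolding torus_affine_map_def by blast+
  then obtain l c where l: "bounded_linear l" and snd_F: "\<And>x. snd (F x) = l x + c"
    by blast
  have "\<forall>i. \<exists>D. (\<forall>x. ((\<lambda>x. fst (F x) $ i) has_derivative D x) (at x)) \<and> (\<forall>v. cis_polynomial (\<lambda>x. D x v))"
    by (intro allI cis_polynomial_has_derivative fst_F)
  then obtain D where
    "\<forall>i. (\<forall>x. ((\<lambda>x. fst (F x) $ i) has_derivative D i x) (at x)) \<and> (\<forall>v. cis_polynomial (\<lambda>x. D i x v))"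
    by (rule choice[THEN exE])
  then have D: "\<And>i x. ((\<lambda>x. fst (F x) $ i) has_derivative D i x) (at x)" "\<And>i v. cis_polynomial (\<lambda>x. D i x v)"
    by simp_all
  have deriv: "(F has_derivative (\<lambda>h. ((\<chi> i. D i x h), l h))) (at x)" for x
  proof -
    have F: "F = (\<lambda>x. ((\<chi> i. fst (F x) $ i), l x + c))"
      by (simp add: fun_eq_iff prod_eq_iff snd_F)
    have "((\<lambda>x. l x + c) has_derivative l) (at x)"
      using has_derivative_add[OF bounded_linear_imp_has_derivative[OF l] has_derivative_const[of c]]
      by simp
    then show ?thesis
      by (subst F) (rule has_derivative_Pair[OF has_derivative_vec_lambda[OF D(1)]])
  qed
  moreover have tam: "torus_affine_map (\<lambda>x. ((\<chi> i. D i x v), l v))" for v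
    unfolding torus_affine_map_def
    by (intro conjI allI exI[of _ "\<lambda>x. 0"] exI[of _ "l v"]) (simp_all add: D(2))
  ultimately show ?thesis
    by (intro exI[where x = "\<lambda>x h. ((\<chi> i. D i x h), l h)"]) simp
qed

lemma smooth_map_torus_affine_map:
  fixes F :: "'a::euclidean_space \<Rightarrow> (complex^'d) \<times> 'c::real_normed_vector"
  assumes "torus_affine_map F"
  shows "smooth_map F"
  by (rule smooth_map_if_derivatives_in_class[where P = torus_affine_map,
        OF assms torus_affine_map_has_derivative])

lemma cis_2pi_eq_iff: "cis (2 * pi * a) = cis (2 * pi * b) \<longleftrightarrow> a - b \<in> \<int>"
proof -
  have "cis (2 * pi * a) = cis (2 * pi * b) \<longleftrightarrow> cis (2 * pi * (a - b)) = 1"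
    by (simp add: cis_divide[symmetric] right_diff_distrib)
  also have "\<dots> \<longleftrightarrow> cos (2 * pi * (a - b)) = 1"
    using sin_cos_squared_add[of "2 * pi * (a - b)"] by (auto simp: complex_eq_iff power2_eq_square)
  also have "\<dots> \<longleftrightarrow> a - b \<in> \<int>"
    by (auto simp: cos_one_2pi_int Ints_def)
  finally show ?thesis .
qed

lemma cis_Arg_of_norm_1: "norm z = 1 \<Longrightarrow> cis (Arg z) = z"
  using cis_Arg[of z] by (cases "z = 0") (auto simp: sgn_div_norm)

lemma has_vector_derivative_cis_affine:
  "((\<lambda>t. cis (a + t * b)) has_vector_derivative b *\<^sub>R (\<i> * cis a)) (at 0)"
proof -
  have "((\<lambda>t. a + t * b) has_derivative (\<lambda>t. t * b)) (at 0)"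
    by (auto intro!: derivative_eq_intros)
  from has_derivative_cis[OF this] show ?thesis
    by (simp add: has_vector_derivative_def)
qed

definition wrap :: "('d \<Rightarrow> 'n \<times> 'n) \<Rightarrow> real^'n^'n \<Rightarrow> complex^'d" where
  "wrap e A = (\<chi> i. cis (2 * pi * A $ fst (e i) $ snd (e i)))"

lemma wrap_in_torus: "wrap e A \<in> torus"
  by (simp add: wrap_def torus_def)

lemma wrap_eq_iff:
  assumes "range e = S" "A \<in> supported_on S" "B \<in> supported_on S"
  shows "wrap e A = wrap e B \<longleftrightarrow> (\<forall>r s. (A - B)$r$s \<in> \<int>)"
proof -
  have "wrap e A = wrap e B \<longleftrightarrow> (\<forall>i. (A - B) $ fst (e i) $ snd (e i) \<in> \<int>)"
    by (simp add: wrap_def vec_eq_iff cis_2pi_eq_iff)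
  also have "\<dots> \<longleftrightarrow> (\<forall>(r, s)\<in>S. (A - B)$r$s \<in> \<int>)"
    unfolding assms(1)[symmetric] by (simp add: split_beta)
  also have "\<dots> \<longleftrightarrow> (\<forall>r s. (A - B)$r$s \<in> \<int>)"
  proof (intro iffI allI)
    fix r s assume "\<forall>(r, s)\<in>S. (A - B)$r$s \<in> \<int>"
    then show "(A - B)$r$s \<in> \<int>"
      using assms(2,3) by (cases "(r, s) \<in> S") (auto simp: supported_on_def)
  qed auto
  finally show ?thesis .
qed

lemma wrap_surj:
  assumes "bij_betw e UNIV S" "z \<in> torus"
  shows "\<exists>B\<in>supported_on S. wrap e B = z"
proof
  define B where "B = (\<chi> r s. if (r, s) \<in> S then Arg (z $ inv e (r, s)) / (2 * pi) else 0)"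
  show "B \<in> supported_on S"
    by (simp add: B_def supported_on_def)
  have "e i \<in> S" "inv e (e i) = i" for i
    using assms(1) by (auto simp: bij_betw_def)
  then show "wrap e B = z"
    using assms(2) by (simp add: wrap_def B_def vec_eq_iff torus_def cis_Arg_of_norm_1)
qed

definition quotient_chart ::
  "nat \<Rightarrow> ('d \<Rightarrow> 'n \<times> 'n) \<Rightarrow> ('n::{finite,linorder}) sqmat \<Rightarrow> (complex^'d) \<times> 'n sqmat" where
  "quotient_chart k e g = (wrap e (far_coord k g), mid_part k g)"

lemma torus_affine_map_quotient_chart: "torus_affine_map (quotient_chart k e)"
proof -
  have poly: "real_polynomial_function (\<lambda>g. 2 * pi * far_coord k g $ r $ s)" for r s
    using polynomial_function_cmul[OF polynomial_function_vec_nth[OF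
        polynomial_function_vec_nth[OF polynomial_function_far_coord]], of "2 * pi"]
    by (simp add: real_polynomial_function_eq)
  then show ?thesis
    unfolding torus_affine_map_def quotient_chart_def wrap_def fst_conv snd_conv vec_lambda_beta
    by (intro conjI allI exI[of _ "mid_part k"] exI[of _ 0] cis_polynomial_cis poly bounded_linear_mask) simp
qed

lemma quotient_chart_eq_iff:
  fixes g h :: "('n::{finite,linorder}) sqmat"
  assumes k: "2 \<le> k" "int CARD('n) \<le> 2 * (int k - 1)"
    and e: "range e = far_band k" and gh: "g \<in> UR" "h \<in> UR"
  shows "quotient_chart k e g = quotient_chart k e h \<longleftrightarrow> (\<exists>\<gamma>\<in>UkZ k. h = g ** \<gamma>)"
proof -
  have far: "far_coord k g \<in> supported_on (far_band k)" for g :: "'n sqmat"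
    using above_diag_far_coord by (simp add: above_diag_iff_far_part mask_eq_self_iff_supported_on)
  have "(\<exists>\<gamma>\<in>UkZ k. h = g ** \<gamma>) \<longleftrightarrow> (\<exists>C. mat 1 + C \<in> UkZ k \<and> h = g ** (mat 1 + C))"
  proof
    assume "\<exists>\<gamma>\<in>UkZ k. h = g ** \<gamma>"
    then obtain \<gamma> where "\<gamma> \<in> UkZ k" "h = g ** \<gamma>" ..
    then show "\<exists>C. mat 1 + C \<in> UkZ k \<and> h = g ** (mat 1 + C)"
      by (intro exI[of _ "\<gamma> - mat 1"]) simp
  qed blast
  also have "\<dots> \<longleftrightarrow>
      (\<exists>C. above_diag (int k - 1) C \<and> (\<forall>r s. C$r$s \<in> \<int>) \<and> h = g ** (mat 1 + C))"
    by (simp add: UkZ_iff_above_diag[OF k(1)])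
  also have "\<dots> \<longleftrightarrow> (\<exists>C. above_diag (int k - 1) C \<and> (\<forall>r s. C$r$s \<in> \<int>) \<and>
      mid_part k h = mid_part k g \<and> far_coord k h = far_coord k g + C)"
    using right_mult_far_band_iff[OF k gh] by blast
  also have "\<dots> \<longleftrightarrow> mid_part k h = mid_part k g \<and> (\<forall>r s. (far_coord k h - far_coord k g)$r$s \<in> \<int>)"
  proof (intro iffI conjI)
    assume "mid_part k h = mid_part k g \<and> (\<forall>r s. (far_coord k h - far_coord k g)$r$s \<in> \<int>)"
    then show "\<exists>C. above_diag (int k - 1) C \<and> (\<forall>r s. C$r$s \<in> \<int>) \<and>
        mid_part k h = mid_part k g \<and> far_coord k h = far_coord k g + C"
      by (intro exI[of _ "far_coord k h - far_coord k g"]) (simp add: above_diag_diff above_diag_far_coord)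
  qed auto
  also have "\<dots> \<longleftrightarrow> quotient_chart k e h = quotient_chart k e g"
    unfolding quotient_chart_def using wrap_eq_iff[OF e far far] by auto
  finally show ?thesis
    by auto
qed

lemma quotient_chart_surj:
  fixes X :: "('n::{finite,linorder}) sqmat"
  assumes k: "2 \<le> k" "int CARD('n) \<le> 2 * (int k - 1)"
    and e: "bij_betw e UNIV (far_band k)" and z: "z \<in> torus" and X: "X \<in> supported_on (mid_band k)"
  obtains g where "g \<in> UR" "quotient_chart k e g = (z, X)"
proof -
  obtain B where B: "B \<in> supported_on (far_band k)" "wrap e B = z"
    using wrap_surj[OF e z] ..
  have "mid_part k X = X" "above_diag (int k - 1) B"
    using X B(1) by (simp_all add: mask_eq_self_iff_supported_on above_diag_iff_far_part)
  from mid_part_far_coord_of_product[OF k this] B(2) show ?thesis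
    by (intro that[of "(mat 1 + X) ** (mat 1 + B)"]) (simp_all add: quotient_chart_def)
qed

lemma quotient_chart_image_UR:
  fixes e :: "'d::finite \<Rightarrow> 'n::{finite,linorder} \<times> 'n"
  assumes k: "2 \<le> k" "int CARD('n) \<le> 2 * (int k - 1)" and e: "bij_betw e UNIV (far_band k)"
  shows "quotient_chart k e ` UR = torus \<times> supported_on (mid_band k)"
proof
  show "quotient_chart k e ` UR \<subseteq> torus \<times> supported_on (mid_band k)"
    by (auto simp: quotient_chart_def wrap_in_torus supported_on_def mask_def)
  show "torus \<times> supported_on (mid_band k) \<subseteq> quotient_chart k e ` UR"
  proof clarify
    fix z :: "complex^'d" and X :: "'n sqmat"
    assume "z \<in> torus" "X \<in> supported_on (mid_band k)"
    with quotient_chart_surj[OF k e] obtain g where "g \<in> UR" "quotient_chart k e g = (z, X)" .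
    then show "(z, X) \<in> quotient_chart k e ` UR"
      by force
  qed
qed

lemma quotient_chart_image_UkR:
  fixes e :: "'d::finite \<Rightarrow> 'n::{finite,linorder} \<times> 'n"
  assumes k: "2 \<le> k" "int CARD('n) \<le> 2 * (int k - 1)" and e: "bij_betw e UNIV (far_band k)"
  shows "quotient_chart k e ` UkR k = torus \<times> {0}"
proof
  show "quotient_chart k e ` UkR k \<subseteq> torus \<times> {0}"
    by (auto simp: quotient_chart_def wrap_in_torus UkR_iff_mid_part)
  show "torus \<times> {0} \<subseteq> quotient_chart k e ` UkR k"
  proof clarify
    fix z :: "complex^'d" assume "z \<in> torus"
    moreover have "0 \<in> supported_on (mid_band k :: ('n \<times> 'n) set)"
      by (simp add: supported_on_def)
    ultimately obtain g where "g \<in> UR" "quotient_chart k e g = (z, 0)"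
      by (rule quotient_chart_surj[OF k e])
    then show "(z, 0) \<in> quotient_chart k e ` UkR k"
      by (force simp: UkR_iff_mid_part quotient_chart_def)
  qed
qed

lemma snd_quotient_chart_derivative:
  assumes "(quotient_chart k e has_derivative L) (at g)"
  shows "snd (L X) = mid_part k X"
proof -
  have "((\<lambda>h. snd (quotient_chart k e h)) has_derivative mid_part k) (at g)"
    by (simp add: quotient_chart_def bounded_linear_imp_has_derivative bounded_linear_mask)
  with has_derivative_snd[OF assms] have "(\<lambda>v. snd (L v)) = mid_part k"
    by (rule has_derivative_unique)
  then show ?thesis
    by (simp add: fun_eq_iff)
qed

lemma fst_quotient_chart_derivative:
  fixes g X :: "('n::{finite,linorder}) sqmat" and e :: "'d::finite \<Rightarrow> 'n \<times> 'n"
  assumes L: "(quotient_chart k e has_derivative L) (at g)"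
    and i: "e i = (r, s)" and mid: "mid_part k X = 0"
  shows "fst (L X) $ i = (2 * pi * (neumann (mid_part k g) ** far_part k X) $ r $ s) *\<^sub>R
    (\<i> * cis (2 * pi * far_coord k g $ r $ s))"
proof -
  let ?\<phi> = "\<lambda>t. fst (quotient_chart k e (g + t *\<^sub>R X)) $ i"
  have "bounded_linear (\<lambda>p :: (complex^'d) \<times> 'n sqmat. fst p $ i)"
    by (rule bounded_linear_compose[OF bounded_linear_vec_nth bounded_linear_fst])
  from bounded_linear.has_vector_derivative[OF this has_vector_derivative_along_line[OF L, of X]]
  have "(?\<phi> has_vector_derivative fst (L X) $ i) (at 0)" .
  moreover have "?\<phi> = (\<lambda>t. cis (2 * pi * far_coord k g $ r $ s +
      t * (2 * pi * (neumann (mid_part k g) ** far_part k X) $ r $ s)))"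
    using far_coord_add_mid_free[of k "t *\<^sub>R X" g for t] mid
    by (simp add: fun_eq_iff quotient_chart_def wrap_def i mask_scaleR matrix_scalar_ac algebra_simps
        flip: scalar_matrix_assoc)
  ultimately show ?thesis
    using vector_derivative_unique_at has_vector_derivative_cis_affine by metis
qed

lemma quotient_chart_derivative_injective:
  fixes g X :: "('n::{finite,linorder}) sqmat" and e :: "'d::finite \<Rightarrow> 'n \<times> 'n"
  assumes e: "range e = far_band k" and L: "(quotient_chart k e has_derivative L) (at g)"
    and X: "above_diag 1 X" and LX: "L X = 0"
  shows "X = 0"
proof -
  have mid: "mid_part k X = 0"
    using snd_quotient_chart_derivative[OF L, of X] LX by simp
  define Y where "Y = neumann (mid_part k g) ** far_part k X"
  have "Y$r$s = 0" if rs: "(r, s) \<in> far_band k" for r s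
  proof -
    obtain i where "e i = (r, s)"
      using rs unfolding e[symmetric] by auto
    from fst_quotient_chart_derivative[OF L this mid] show ?thesis
      using LX by (simp add: Y_def)
  qed
  moreover have "above_diag (int k - 1) Y"
    using above_diag_mult[OF above_diag_neumann[OF above_diag_mid_part] above_diag_far_part]
    by (simp add: Y_def)
  ultimately have "Y = 0"
    by (metis above_diag_iff_far_part mask_eq_0_iff)
  have "far_part k X = ((mat 1 + mid_part k g) ** neumann (mid_part k g)) ** far_part k X"
    by (simp add: neumann_right_inverse[OF above_diag_mid_part])
  also have "\<dots> = (mat 1 + mid_part k g) ** Y"
    by (simp add: Y_def matrix_mul_assoc)
  finally have "far_part k X = 0"
    using \<open>Y = 0\<close> by simp
  then show "X = 0"
    using strict_upper_eq_mid_plus_far[OF X, of k] mid by simp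
qed

theorem mainTheorem5:
  fixes n k :: nat
  assumes "CARD('n) = n"
    and "CARD('d::finite) = dnk n k"
    and "n \<ge> 2" and "k \<le> n" and "real k \<ge> real n / 2 + 1"
  shows "\<exists>(f :: real^('n::{finite,linorder})^('n::{finite,linorder}) \<Rightarrow> (complex^'d) \<times> (real^('n::{finite,linorder})^('n::{finite,linorder}))) (V :: (real^('n::{finite,linorder})^('n::{finite,linorder})) set).
      subspace V \<and> dim V = cnk n k \<and>
      smooth_map f \<and>
      f ` UR = torus \<times> V \<and>
      (\<forall>g\<in>UR. \<forall>h\<in>UR. f g = f h \<longleftrightarrow> (\<exists>\<gamma>\<in>UkZ k. h = g ** \<gamma>)) \<and>
      (\<forall>g\<in>UR. \<exists>L. (f has_derivative L) (at g) \<and> (\<forall>X\<in>strict_upper. L X = 0 \<longrightarrow> X = 0)) \<and>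
      f ` UkR k = torus \<times> {0}"
proof -
  have "real (n + 2) \<le> real (2 * k)"
    using assms(5) by simp
  then have "n + 2 \<le> 2 * k"
    by (simp only: of_nat_le_iff)
  then have k: "2 \<le> k" "int CARD('n) \<le> 2 * (int k - 1)"
    using assms(1,3) by presburger+
  have "card (far_band k :: ('n \<times> 'n) set) = CARD('d)"
    using card_far_band[OF assms(1) _ assms(4)] k(1) assms(2) by simp
  then obtain e :: "'d \<Rightarrow> 'n \<times> 'n" where e: "bij_betw e UNIV (far_band k)"
    by (metis finite finite_same_card_bij)
  then have range_e: "range e = far_band k"
    by (simp add: bij_betw_def)
  have "\<exists>L. (quotient_chart k e has_derivative L) (at g) \<and> (\<forall>X\<in>strict_upper. L X = 0 \<longrightarrow> X = 0)" for g
    using torus_affine_map_has_derivative[OF torus_affine_map_quotient_chart]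
      quotient_chart_derivative_injective[OF range_e] strict_upper_iff_above_diag by metis
  moreover have "dim (supported_on (mid_band k) :: ('n sqmat) set) = cnk n k"
    using dim_supported_on card_mid_band[OF assms(1) k(1) assms(4)] by metis
  ultimately show ?thesis
    using subspace_supported_on
      smooth_map_torus_affine_map[OF torus_affine_map_quotient_chart]
      quotient_chart_image_UR[OF k e] quotient_chart_eq_iff[OF k range_e] quotient_chart_image_UkR[OF k e]
    by (intro exI[of _ "quotient_chart k e"] exI[of _ "supported_on (mid_band k)"]) auto
qed

end
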